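(* Let $\Omega$ be a set and let $G=H\times K\leq{\rm Sym}(\Omega)$ be a finite group which is the (internal) direct product of subgroups $H$ and $K$ with $\gcd(|H|,|K|)=1$. Then $Z(G)^{(2),\Omega}=Z(H)^{(2),\Omega}\times Z(K)^{(2),\Omega}$.
   Context: Permutations act on the right. For $X\leq{\rm Sym}(\Omega)$, the $2$-closure of $X$ on $\Omega$ is $X^{(2),\Omega}=\{\theta\in{\rm Sym}(\Omega)\mid \forall \alpha,\beta\in\Omega\ \exists g\in X:\ \alpha^\theta=\alpha^g,\ \beta^\theta=\beta^g\}$; it is a subgroup of ${\rm Sym}(\Omega)$ containing $X$. $Z(X)$ denotes the center of $X$. *)

theory Defs
  imports "HOL-Algebra.Algebra"
begin

text \<open>Sym(Omega) is rendered as the HOL-Algebra group BijGroup Omega (bijections of Omega,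
  extensional outside Omega). Permutation groups are subgroups (carrier sets) of it.\<close>

definition perm_center :: "'a set \<Rightarrow> ('a \<Rightarrow> 'a) set \<Rightarrow> ('a \<Rightarrow> 'a) set" where
  "perm_center \<Omega> A = {z \<in> A. \<forall>x \<in> A. z \<otimes>\<^bsub>BijGroup \<Omega>\<^esub> x = x \<otimes>\<^bsub>BijGroup \<Omega>\<^esub> z}"

definition two_closure :: "'a set \<Rightarrow> ('a \<Rightarrow> 'a) set \<Rightarrow> ('a \<Rightarrow> 'a) set" where
  "two_closure \<Omega> A = {\<theta> \<in> carrier (BijGroup \<Omega>).
      \<forall>\<alpha> \<in> \<Omega>. \<forall>\<beta> \<in> \<Omega>. \<exists>g \<in> A. \<theta> \<alpha> = g \<alpha> \<and> \<theta> \<beta> = g \<beta>}"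

definition internal_direct_product :: "'a set \<Rightarrow> ('a \<Rightarrow> 'a) set \<Rightarrow> ('a \<Rightarrow> 'a) set \<Rightarrow> ('a \<Rightarrow> 'a) set \<Rightarrow> bool" where
  "internal_direct_product \<Omega> G H K \<longleftrightarrow>
     subgroup H (BijGroup \<Omega>) \<and> subgroup K (BijGroup \<Omega>) \<and>
     G = H <#>\<^bsub>BijGroup \<Omega>\<^esub> K \<and>
     H \<inter> K = {\<one>\<^bsub>BijGroup \<Omega>\<^esub>} \<and>
     (\<forall>h \<in> H. \<forall>k \<in> K. h \<otimes>\<^bsub>BijGroup \<Omega>\<^esub> k = k \<otimes>\<^bsub>BijGroup \<Omega>\<^esub> h)"

end

(* Write Z(G) = Z(H) Z(K), the two factors commuting elementwise.  A permutation c commuting with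
   every element of a set M commutes with every element of the 2-closure of M: an element of the
   2-closure agrees with a single element of M at both a and c a.  Hence, for abelian M, an element
   of the 2-closure that agrees with g \<in> M at a point agrees with every power g^n there.
   Coprimality of |H| and |K| gives exponents e, f for which g \<mapsto> g^e and g \<mapsto> g^f are the
   projections of Z(G) onto Z(H) and Z(K), and g^(e+f) = g.  For \<theta> in the 2-closure of Z(G) this
   gives \<theta> = \<theta>^e \<theta>^f with \<theta>^e, \<theta>^f in the 2-closures of Z(H), Z(K); the same exponents show that
   these 2-closures meet trivially, and they commute because Z(H) and Z(K) do. *)

theory Submission
  imports Defs
begin

definition center_of :: "('a, 'b) monoid_scheme \<Rightarrow> 'a set \<Rightarrow> 'a set" where
  "center_of G A = {z \<in> A. \<forall>x\<in>A. z \<otimes>\<^bsub>G\<^esub> x = x \<otimes>\<^bsub>G\<^esub> z}"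

lemma perm_center_eq_center_of: "perm_center \<Omega> A = center_of (BijGroup \<Omega>) A"
  by (simp add: perm_center_def center_of_def)

lemma center_ofD:
  assumes "z \<in> center_of G H"
  shows "z \<in> H" and "x \<in> H \<Longrightarrow> z \<otimes>\<^bsub>G\<^esub> x = x \<otimes>\<^bsub>G\<^esub> z"
  using assms by (auto simp: center_of_def)

context group
begin

lemma subgroup_center_of:
  assumes H: "subgroup H G"
  shows "subgroup (center_of G H) G"
proof (rule subgroupI)
  show "center_of G H \<subseteq> carrier G" "center_of G H \<noteq> {}"
    using subgroup.subset[OF H] subgroup.one_closed[OF H] subgroup.mem_carrier[OF H]
    by (auto simp: center_of_def)
next
  fix a assume a: "a \<in> center_of G H"
  have aG: "a \<in> carrier G" using subgroup.mem_carrier[OF H center_ofD(1)[OF a]] .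
  have "inv a \<otimes> x = x \<otimes> inv a" if x: "x \<in> H" for x
  proof -
    have xG: "x \<in> carrier G" using subgroup.mem_carrier[OF H x] .
    have "inv a \<otimes> x = inv a \<otimes> (x \<otimes> a) \<otimes> inv a" using aG xG by (simp add: m_assoc)
    also have "\<dots> = inv a \<otimes> (a \<otimes> x) \<otimes> inv a" using center_ofD(2)[OF a x] by simp
    also have "\<dots> = x \<otimes> inv a" using aG xG by (simp add: m_assoc[symmetric])
    finally show ?thesis .
  qed
  then show "inv a \<in> center_of G H"
    using subgroup.m_inv_closed[OF H center_ofD(1)[OF a]] by (simp add: center_of_def)
next
  fix a b assume a: "a \<in> center_of G H" and b: "b \<in> center_of G H"
  have aG: "a \<in> carrier G" using subgroup.mem_carrier[OF H center_ofD(1)[OF a]] .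
  have bG: "b \<in> carrier G" using subgroup.mem_carrier[OF H center_ofD(1)[OF b]] .
  have "a \<otimes> b \<otimes> x = x \<otimes> (a \<otimes> b)" if x: "x \<in> H" for x
  proof -
    have xG: "x \<in> carrier G" using subgroup.mem_carrier[OF H x] .
    have "a \<otimes> b \<otimes> x = a \<otimes> (x \<otimes> b)" using center_ofD(2)[OF b x] aG bG xG by (simp add: m_assoc)
    also have "\<dots> = x \<otimes> a \<otimes> b" using center_ofD(2)[OF a x] aG bG xG by (simp add: m_assoc[symmetric])
    finally show ?thesis using aG bG xG by (simp add: m_assoc)
  qed
  then show "a \<otimes> b \<in> center_of G H"
    using subgroup.m_closed[OF H center_ofD(1)[OF a] center_ofD(1)[OF b]] by (simp add: center_of_def)
qed

lemma subset_set_mult_left: "subgroup K G \<Longrightarrow> H \<subseteq> carrier G \<Longrightarrow> H \<subseteq> H <#> K"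
  unfolding set_mult_def by (force dest: subgroup.one_closed)

lemma subset_set_mult_right: "subgroup H G \<Longrightarrow> K \<subseteq> carrier G \<Longrightarrow> K \<subseteq> H <#> K"
  unfolding set_mult_def by (force dest: subgroup.one_closed)

lemma center_of_set_mult:
  assumes H: "subgroup H G" and K: "subgroup K G"
    and commute: "\<forall>h\<in>H. \<forall>k\<in>K. h \<otimes> k = k \<otimes> h"
  shows "center_of G (H <#> K) = center_of G H <#> center_of G K"
proof
  show "center_of G (H <#> K) \<subseteq> center_of G H <#> center_of G K"
  proof
    fix z assume z: "z \<in> center_of G (H <#> K)"
    then obtain h k where h: "h \<in> H" and k: "k \<in> K" and z_eq: "z = h \<otimes> k"
      using center_ofD(1)[OF z] unfolding set_mult_def by blast
    have hG: "h \<in> carrier G" and kG: "k \<in> carrier G"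
      using subgroup.mem_carrier[OF H h] subgroup.mem_carrier[OF K k] .
    have zx: "x \<otimes> (h \<otimes> k) = h \<otimes> k \<otimes> x" if "x \<in> H <#> K" for x
      using center_ofD(2)[OF z that] z_eq by simp
    have "h \<otimes> x = x \<otimes> h" if x: "x \<in> H" for x
    proof -
      have xG: "x \<in> carrier G" using subgroup.mem_carrier[OF H x] .
      have "h \<otimes> x \<otimes> k = h \<otimes> k \<otimes> x" using commute x k hG kG xG by (simp add: m_assoc)
      also have "\<dots> = x \<otimes> h \<otimes> k"
        using zx subset_set_mult_left[OF K subgroup.subset[OF H]] x hG kG xG by (auto simp: m_assoc)
      finally show ?thesis using hG kG xG by simp
    qed
    moreover have "k \<otimes> x = x \<otimes> k" if x: "x \<in> K" for x
    proof -
      have xG: "x \<in> carrier G" using subgroup.mem_carrier[OF K x] .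
      have "h \<otimes> (k \<otimes> x) = x \<otimes> (h \<otimes> k)"
        using zx subset_set_mult_right[OF H subgroup.subset[OF K]] x hG kG xG by (auto simp: m_assoc)
      also have "\<dots> = h \<otimes> (x \<otimes> k)"
        using commute h x hG kG xG by (simp add: m_assoc[symmetric] flip: commute[rule_format, OF h x])
      finally show ?thesis using hG kG xG by simp
    qed
    ultimately show "z \<in> center_of G H <#> center_of G K"
      using h k z_eq unfolding center_of_def set_mult_def by blast
  qed
next
  show "center_of G H <#> center_of G K \<subseteq> center_of G (H <#> K)"
  proof
    fix z assume "z \<in> center_of G H <#> center_of G K"
    then obtain h k where h: "h \<in> center_of G H" and k: "k \<in> center_of G K" and z_eq: "z = h \<otimes> k"
      unfolding set_mult_def by blast
    have hH: "h \<in> H" and kK: "k \<in> K" using center_ofD(1)[OF h] center_ofD(1)[OF k] .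
    have hG: "h \<in> carrier G" and kG: "k \<in> carrier G"
      using subgroup.mem_carrier[OF H hH] subgroup.mem_carrier[OF K kK] .
    have "h \<otimes> k \<otimes> (x \<otimes> y) = x \<otimes> y \<otimes> (h \<otimes> k)" if x: "x \<in> H" and y: "y \<in> K" for x y
    proof -
      have xG: "x \<in> carrier G" and yG: "y \<in> carrier G"
        using subgroup.mem_carrier[OF H x] subgroup.mem_carrier[OF K y] .
      have "h \<otimes> k \<otimes> (x \<otimes> y) = (h \<otimes> x) \<otimes> (k \<otimes> y)"
        using commute x kK hG kG xG yG by (simp add: m_assoc[symmetric]) (simp add: m_assoc)
      also have "\<dots> = (x \<otimes> h) \<otimes> (y \<otimes> k)" using center_ofD(2)[OF h x] center_ofD(2)[OF k y] by simp
      also have "\<dots> = x \<otimes> y \<otimes> (h \<otimes> k)"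
        using commute[rule_format, OF hH y] hG kG xG yG
        by (simp add: m_assoc[symmetric]) (simp add: m_assoc)
      finally show ?thesis .
    qed
    then show "z \<in> center_of G (H <#> K)"
      using hH kK z_eq unfolding center_of_def set_mult_def by blast
  qed
qed

lemma pow_card_subgroup:
  assumes H: "subgroup H G" and h: "h \<in> H"
  shows "h [^] card H = \<one>"
proof -
  interpret H: group "G\<lparr>carrier := H\<rparr>" using subgroup.subgroup_is_group[OF H is_group] .
  have "h [^]\<^bsub>G\<lparr>carrier := H\<rparr>\<^esub> card H = \<one>"
    using H.pow_order_eq_1 h by (simp add: order_def)
  then show ?thesis using nat_pow_consistent by simp
qed

lemma coprime_subgroups_exponent:
  assumes H: "subgroup H G" and K: "subgroup K G" and "finite K"
    and "coprime (card H) (card K)"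
  obtains e :: nat where "\<forall>h\<in>H. h [^] e = h" and "\<forall>k\<in>K. k [^] e = \<one>"
proof -
  have "card K \<noteq> 0" using \<open>finite K\<close> subgroup.one_closed[OF K] by auto
  then obtain u v where uv: "card K * u = card H * v + 1"
    using bezout_nat[of "card K" "card H"] \<open>coprime (card H) (card K)\<close>
    by (auto simp: coprime_iff_gcd_eq_1 gcd.commute)
  show thesis
  proof (rule that[of "card K * u"])
    show "\<forall>h\<in>H. h [^] (card K * u) = h"
      using pow_card_subgroup[OF H] subgroup.mem_carrier[OF H]
      by (simp add: uv nat_pow_mult[symmetric] nat_pow_pow[symmetric])
    show "\<forall>k\<in>K. k [^] (card K * u) = \<one>"
      using pow_card_subgroup[OF K] subgroup.mem_carrier[OF K] by (simp add: nat_pow_pow[symmetric])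
  qed
qed

end

lemma BijGroup_mult_apply:
  assumes "x \<in> carrier (BijGroup \<Omega>)" "y \<in> carrier (BijGroup \<Omega>)" "a \<in> \<Omega>"
  shows "(x \<otimes>\<^bsub>BijGroup \<Omega>\<^esub> y) a = x (y a)"
  using assms by (simp add: BijGroup_def compose_def)

lemma BijGroup_one_apply: "a \<in> \<Omega> \<Longrightarrow> \<one>\<^bsub>BijGroup \<Omega>\<^esub> a = a"
  by (simp add: BijGroup_def)

lemma BijGroup_apply_closed: "x \<in> carrier (BijGroup \<Omega>) \<Longrightarrow> a \<in> \<Omega> \<Longrightarrow> x a \<in> \<Omega>"
  by (auto simp: BijGroup_def dest: Bij_imp_funcset)

lemma BijGroup_eqI:
  assumes "x \<in> carrier (BijGroup \<Omega>)" "y \<in> carrier (BijGroup \<Omega>)" "\<And>a. a \<in> \<Omega> \<Longrightarrow> x a = y a"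
  shows "x = y"
  using assms by (auto simp: BijGroup_def intro: extensionalityI dest: Bij_imp_extensional)

lemma BijGroup_inv_apply:
  assumes "x \<in> carrier (BijGroup \<Omega>)" "a \<in> \<Omega>"
  shows "(inv\<^bsub>BijGroup \<Omega>\<^esub> x) (x a) = a"
proof -
  interpret S: group "BijGroup \<Omega>" by (rule group_BijGroup)
  show ?thesis
    using BijGroup_mult_apply[OF S.inv_closed[OF assms(1)] assms] assms
    by (simp add: BijGroup_one_apply)
qed

lemma BijGroup_apply_inv:
  assumes "x \<in> carrier (BijGroup \<Omega>)" "a \<in> \<Omega>"
  shows "x ((inv\<^bsub>BijGroup \<Omega>\<^esub> x) a) = a"
proof -
  interpret S: group "BijGroup \<Omega>" by (rule group_BijGroup)
  show ?thesis
    using BijGroup_inv_apply[OF S.inv_closed[OF assms(1)] assms(2)] assms(1) by simp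
qed

lemma two_closureI:
  assumes "\<theta> \<in> carrier (BijGroup \<Omega>)"
    and "\<And>\<alpha> \<beta>. \<alpha> \<in> \<Omega> \<Longrightarrow> \<beta> \<in> \<Omega> \<Longrightarrow> \<exists>g\<in>M. \<theta> \<alpha> = g \<alpha> \<and> \<theta> \<beta> = g \<beta>"
  shows "\<theta> \<in> two_closure \<Omega> M"
  using assms by (simp add: two_closure_def)

lemma two_closureE:
  assumes "\<theta> \<in> two_closure \<Omega> M" "\<alpha> \<in> \<Omega>" "\<beta> \<in> \<Omega>"
  obtains g where "g \<in> M" "\<theta> \<alpha> = g \<alpha>" "\<theta> \<beta> = g \<beta>"
  using assms by (auto simp: two_closure_def)

lemma two_closure_carrier: "two_closure \<Omega> M \<subseteq> carrier (BijGroup \<Omega>)"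
  by (auto simp: two_closure_def)

lemma two_closure_commute_apply:
  assumes M: "M \<subseteq> carrier (BijGroup \<Omega>)" and \<theta>: "\<theta> \<in> two_closure \<Omega> M"
    and c: "c \<in> carrier (BijGroup \<Omega>)"
    and comm: "\<forall>x\<in>M. c \<otimes>\<^bsub>BijGroup \<Omega>\<^esub> x = x \<otimes>\<^bsub>BijGroup \<Omega>\<^esub> c"
    and a: "a \<in> \<Omega>"
  shows "\<theta> (c a) = c (\<theta> a)"
proof -
  obtain g where g: "g \<in> M" "\<theta> a = g a" "\<theta> (c a) = g (c a)"
    using two_closureE[OF \<theta> a BijGroup_apply_closed[OF c a]] .
  have gS: "g \<in> carrier (BijGroup \<Omega>)" using g(1) M by blast
  have "g (c a) = (g \<otimes>\<^bsub>BijGroup \<Omega>\<^esub> c) a" using BijGroup_mult_apply[OF gS c a] by simp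
  also have "\<dots> = (c \<otimes>\<^bsub>BijGroup \<Omega>\<^esub> g) a" using comm g(1) by simp
  also have "\<dots> = c (g a)" using BijGroup_mult_apply[OF c gS a] .
  finally show ?thesis using g by simp
qed

lemma two_closure_commute:
  assumes M: "M \<subseteq> carrier (BijGroup \<Omega>)" and \<theta>: "\<theta> \<in> two_closure \<Omega> M"
    and c: "c \<in> carrier (BijGroup \<Omega>)"
    and comm: "\<forall>x\<in>M. c \<otimes>\<^bsub>BijGroup \<Omega>\<^esub> x = x \<otimes>\<^bsub>BijGroup \<Omega>\<^esub> c"
  shows "\<theta> \<otimes>\<^bsub>BijGroup \<Omega>\<^esub> c = c \<otimes>\<^bsub>BijGroup \<Omega>\<^esub> \<theta>"
proof -
  interpret S: group "BijGroup \<Omega>" by (rule group_BijGroup)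
  have \<theta>S: "\<theta> \<in> carrier (BijGroup \<Omega>)" using \<theta> two_closure_carrier by blast
  show ?thesis
    by (rule BijGroup_eqI[where \<Omega> = \<Omega>])
       (simp_all add: \<theta>S c BijGroup_mult_apply two_closure_commute_apply[OF M \<theta> c comm])
qed

lemma two_closure_pow_apply:
  assumes M: "M \<subseteq> carrier (BijGroup \<Omega>)"
    and abelian: "\<forall>x\<in>M. \<forall>y\<in>M. x \<otimes>\<^bsub>BijGroup \<Omega>\<^esub> y = y \<otimes>\<^bsub>BijGroup \<Omega>\<^esub> x"
    and \<theta>: "\<theta> \<in> two_closure \<Omega> M" and g: "g \<in> M"
    and a: "a \<in> \<Omega>" and \<theta>a: "\<theta> a = g a"
  shows "(\<theta> [^]\<^bsub>BijGroup \<Omega>\<^esub> (n::nat)) a = (g [^]\<^bsub>BijGroup \<Omega>\<^esub> n) a"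
proof (induction n)
  case 0
  show ?case by simp
next
  case (Suc n)
  interpret S: group "BijGroup \<Omega>" by (rule group_BijGroup)
  have gS: "g \<in> carrier (BijGroup \<Omega>)" using g M by blast
  have \<theta>S: "\<theta> \<in> carrier (BijGroup \<Omega>)" using \<theta> two_closure_carrier by blast
  have "\<forall>x\<in>M. g [^]\<^bsub>BijGroup \<Omega>\<^esub> n \<otimes>\<^bsub>BijGroup \<Omega>\<^esub> x = x \<otimes>\<^bsub>BijGroup \<Omega>\<^esub> g [^]\<^bsub>BijGroup \<Omega>\<^esub> n"
    using S.group_commutes_pow abelian g gS M by blast
  then have commute: "\<theta> ((g [^]\<^bsub>BijGroup \<Omega>\<^esub> n) a) = (g [^]\<^bsub>BijGroup \<Omega>\<^esub> n) (\<theta> a)"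
    using two_closure_commute_apply[OF M \<theta> S.nat_pow_closed[OF gS] _ a] by blast
  have "(\<theta> [^]\<^bsub>BijGroup \<Omega>\<^esub> Suc n) a = \<theta> ((\<theta> [^]\<^bsub>BijGroup \<Omega>\<^esub> n) a)"
    unfolding S.nat_pow_Suc2[OF \<theta>S] by (rule BijGroup_mult_apply[OF \<theta>S S.nat_pow_closed[OF \<theta>S] a])
  also have "\<dots> = (g [^]\<^bsub>BijGroup \<Omega>\<^esub> n) (g a)"
    using Suc.IH commute \<theta>a by simp
  also have "\<dots> = (g [^]\<^bsub>BijGroup \<Omega>\<^esub> Suc n) a"
    by (simp add: BijGroup_mult_apply gS a)
  finally show ?case .
qed

lemma two_closure_pow_eq:
  assumes M: "M \<subseteq> carrier (BijGroup \<Omega>)"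
    and abelian: "\<forall>x\<in>M. \<forall>y\<in>M. x \<otimes>\<^bsub>BijGroup \<Omega>\<^esub> y = y \<otimes>\<^bsub>BijGroup \<Omega>\<^esub> x"
    and \<theta>: "\<theta> \<in> two_closure \<Omega> M"
    and eq: "\<forall>g\<in>M. g [^]\<^bsub>BijGroup \<Omega>\<^esub> (m::nat) = g [^]\<^bsub>BijGroup \<Omega>\<^esub> (n::nat)"
  shows "\<theta> [^]\<^bsub>BijGroup \<Omega>\<^esub> m = \<theta> [^]\<^bsub>BijGroup \<Omega>\<^esub> n"
proof -
  interpret S: group "BijGroup \<Omega>" by (rule group_BijGroup)
  have \<theta>S: "\<theta> \<in> carrier (BijGroup \<Omega>)" using \<theta> two_closure_carrier by blast
  show ?thesis
  proof (rule BijGroup_eqI[where \<Omega> = \<Omega>])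
    show "\<theta> [^]\<^bsub>BijGroup \<Omega>\<^esub> m \<in> carrier (BijGroup \<Omega>)"
      and "\<theta> [^]\<^bsub>BijGroup \<Omega>\<^esub> n \<in> carrier (BijGroup \<Omega>)" using \<theta>S by simp_all
    fix a assume a: "a \<in> \<Omega>"
    obtain g where "g \<in> M" "\<theta> a = g a" using two_closureE[OF \<theta> a a] by blast
    then show "(\<theta> [^]\<^bsub>BijGroup \<Omega>\<^esub> m) a = (\<theta> [^]\<^bsub>BijGroup \<Omega>\<^esub> n) a"
      using two_closure_pow_apply[OF M abelian \<theta> _ a] eq by metis
  qed
qed

lemma two_closure_pow:
  assumes M: "M \<subseteq> carrier (BijGroup \<Omega>)"
    and abelian: "\<forall>x\<in>M. \<forall>y\<in>M. x \<otimes>\<^bsub>BijGroup \<Omega>\<^esub> y = y \<otimes>\<^bsub>BijGroup \<Omega>\<^esub> x"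
    and \<theta>: "\<theta> \<in> two_closure \<Omega> M"
    and pow: "\<forall>g\<in>M. g [^]\<^bsub>BijGroup \<Omega>\<^esub> (n::nat) \<in> N"
  shows "\<theta> [^]\<^bsub>BijGroup \<Omega>\<^esub> n \<in> two_closure \<Omega> N"
proof (rule two_closureI)
  interpret S: group "BijGroup \<Omega>" by (rule group_BijGroup)
  show "\<theta> [^]\<^bsub>BijGroup \<Omega>\<^esub> n \<in> carrier (BijGroup \<Omega>)"
    using \<theta> two_closure_carrier by blast
  fix \<alpha> \<beta> assume "\<alpha> \<in> \<Omega>" "\<beta> \<in> \<Omega>"
  then obtain g where "g \<in> M" "\<theta> \<alpha> = g \<alpha>" "\<theta> \<beta> = g \<beta>"
    using two_closureE[OF \<theta>] by metis
  then show "\<exists>h\<in>N. (\<theta> [^]\<^bsub>BijGroup \<Omega>\<^esub> n) \<alpha> = h \<alpha> \<and> (\<theta> [^]\<^bsub>BijGroup \<Omega>\<^esub> n) \<beta> = h \<beta>"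
    using two_closure_pow_apply[OF M abelian \<theta>] pow \<open>\<alpha> \<in> \<Omega>\<close> \<open>\<beta> \<in> \<Omega>\<close> by blast
qed

lemma two_closure_set_mult:
  assumes M: "M \<subseteq> carrier (BijGroup \<Omega>)" and N: "N \<subseteq> carrier (BijGroup \<Omega>)"
  shows "two_closure \<Omega> M <#>\<^bsub>BijGroup \<Omega>\<^esub> two_closure \<Omega> N
    \<subseteq> two_closure \<Omega> (M <#>\<^bsub>BijGroup \<Omega>\<^esub> N)"
proof
  interpret S: group "BijGroup \<Omega>" by (rule group_BijGroup)
  fix p assume "p \<in> two_closure \<Omega> M <#>\<^bsub>BijGroup \<Omega>\<^esub> two_closure \<Omega> N"
  then obtain \<theta> \<eta> where \<theta>: "\<theta> \<in> two_closure \<Omega> M" and \<eta>: "\<eta> \<in> two_closure \<Omega> N"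
    and p: "p = \<theta> \<otimes>\<^bsub>BijGroup \<Omega>\<^esub> \<eta>"
    unfolding set_mult_def by blast
  have \<theta>S: "\<theta> \<in> carrier (BijGroup \<Omega>)" and \<eta>S: "\<eta> \<in> carrier (BijGroup \<Omega>)"
    using \<theta> \<eta> two_closure_carrier by blast+
  show "p \<in> two_closure \<Omega> (M <#>\<^bsub>BijGroup \<Omega>\<^esub> N)"
  proof (rule two_closureI)
    show "p \<in> carrier (BijGroup \<Omega>)" using p \<theta>S \<eta>S by simp
    fix \<alpha> \<beta> assume \<alpha>: "\<alpha> \<in> \<Omega>" and \<beta>: "\<beta> \<in> \<Omega>"
    obtain h where h: "h \<in> N" "\<eta> \<alpha> = h \<alpha>" "\<eta> \<beta> = h \<beta>"
      using two_closureE[OF \<eta> \<alpha> \<beta>] .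
    have hS: "h \<in> carrier (BijGroup \<Omega>)" using h(1) N by blast
    obtain g where g: "g \<in> M" "\<theta> (h \<alpha>) = g (h \<alpha>)" "\<theta> (h \<beta>) = g (h \<beta>)"
      using two_closureE[OF \<theta> BijGroup_apply_closed[OF hS \<alpha>] BijGroup_apply_closed[OF hS \<beta>]] .
    have gS: "g \<in> carrier (BijGroup \<Omega>)" using g(1) M by blast
    have "g \<otimes>\<^bsub>BijGroup \<Omega>\<^esub> h \<in> M <#>\<^bsub>BijGroup \<Omega>\<^esub> N"
      using g(1) h(1) unfolding set_mult_def by blast
    moreover have "p \<gamma> = (g \<otimes>\<^bsub>BijGroup \<Omega>\<^esub> h) \<gamma>"
      if "\<gamma> \<in> \<Omega>" "\<eta> \<gamma> = h \<gamma>" "\<theta> (h \<gamma>) = g (h \<gamma>)" for \<gamma>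
      using that p by (simp add: BijGroup_mult_apply \<theta>S \<eta>S gS hS)
    ultimately show "\<exists>f\<in>M <#>\<^bsub>BijGroup \<Omega>\<^esub> N. p \<alpha> = f \<alpha> \<and> p \<beta> = f \<beta>"
      using \<alpha> \<beta> g h by blast
  qed
qed

lemma two_closure_inv:
  assumes M: "subgroup M (BijGroup \<Omega>)" and \<theta>: "\<theta> \<in> two_closure \<Omega> M"
  shows "inv\<^bsub>BijGroup \<Omega>\<^esub> \<theta> \<in> two_closure \<Omega> M"
proof (rule two_closureI)
  interpret S: group "BijGroup \<Omega>" by (rule group_BijGroup)
  have \<theta>S: "\<theta> \<in> carrier (BijGroup \<Omega>)" using \<theta> two_closure_carrier by blast
  then show "inv\<^bsub>BijGroup \<Omega>\<^esub> \<theta> \<in> carrier (BijGroup \<Omega>)" by simp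
  fix \<alpha> \<beta> assume \<alpha>: "\<alpha> \<in> \<Omega>" and \<beta>: "\<beta> \<in> \<Omega>"
  let ?\<alpha>' = "(inv\<^bsub>BijGroup \<Omega>\<^esub> \<theta>) \<alpha>" and ?\<beta>' = "(inv\<^bsub>BijGroup \<Omega>\<^esub> \<theta>) \<beta>"
  obtain g where g: "g \<in> M" "\<theta> ?\<alpha>' = g ?\<alpha>'" "\<theta> ?\<beta>' = g ?\<beta>'"
    using two_closureE[OF \<theta>] BijGroup_apply_closed[OF S.inv_closed[OF \<theta>S]] \<alpha> \<beta> by metis
  have gS: "g \<in> carrier (BijGroup \<Omega>)" using g(1) subgroup.subset[OF M] by blast
  have "(inv\<^bsub>BijGroup \<Omega>\<^esub> \<theta>) \<gamma> = (inv\<^bsub>BijGroup \<Omega>\<^esub> g) \<gamma>"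
    if "\<gamma> \<in> \<Omega>" "\<theta> ((inv\<^bsub>BijGroup \<Omega>\<^esub> \<theta>) \<gamma>) = g ((inv\<^bsub>BijGroup \<Omega>\<^esub> \<theta>) \<gamma>)" for \<gamma>
    using that BijGroup_inv_apply[OF gS BijGroup_apply_closed[OF S.inv_closed[OF \<theta>S] that(1)]]
      BijGroup_apply_inv[OF \<theta>S that(1)] by simp
  then show "\<exists>f\<in>M. (inv\<^bsub>BijGroup \<Omega>\<^esub> \<theta>) \<alpha> = f \<alpha> \<and> (inv\<^bsub>BijGroup \<Omega>\<^esub> \<theta>) \<beta> = f \<beta>"
    using g \<alpha> \<beta> subgroup.m_inv_closed[OF M g(1)] by blast
qed

lemma subgroup_two_closure:
  assumes M: "subgroup M (BijGroup \<Omega>)"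
  shows "subgroup (two_closure \<Omega> M) (BijGroup \<Omega>)"
proof -
  interpret S: group "BijGroup \<Omega>" by (rule group_BijGroup)
  have "\<one>\<^bsub>BijGroup \<Omega>\<^esub> \<in> two_closure \<Omega> M"
    using subgroup.one_closed[OF M] by (intro two_closureI) auto
  moreover have "two_closure \<Omega> M <#>\<^bsub>BijGroup \<Omega>\<^esub> two_closure \<Omega> M \<subseteq> two_closure \<Omega> M"
    using two_closure_set_mult[OF subgroup.subset[OF M] subgroup.subset[OF M]]
    by (simp add: S.subgroup_mult_id[OF M])
  ultimately show ?thesis
    using two_closure_carrier two_closure_inv[OF M]
    by (intro S.subgroupI) (auto simp: set_mult_def)
qed

lemma two_closure_commute_elementwise:
  assumes A: "A \<subseteq> carrier (BijGroup \<Omega>)" and B: "B \<subseteq> carrier (BijGroup \<Omega>)"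
    and commute: "\<forall>a\<in>A. \<forall>b\<in>B. a \<otimes>\<^bsub>BijGroup \<Omega>\<^esub> b = b \<otimes>\<^bsub>BijGroup \<Omega>\<^esub> a"
    and \<theta>: "\<theta> \<in> two_closure \<Omega> A" and \<eta>: "\<eta> \<in> two_closure \<Omega> B"
  shows "\<theta> \<otimes>\<^bsub>BijGroup \<Omega>\<^esub> \<eta> = \<eta> \<otimes>\<^bsub>BijGroup \<Omega>\<^esub> \<theta>"
proof -
  have "\<forall>b\<in>B. \<theta> \<otimes>\<^bsub>BijGroup \<Omega>\<^esub> b = b \<otimes>\<^bsub>BijGroup \<Omega>\<^esub> \<theta>"
  proof
    fix b assume b: "b \<in> B"
    show "\<theta> \<otimes>\<^bsub>BijGroup \<Omega>\<^esub> b = b \<otimes>\<^bsub>BijGroup \<Omega>\<^esub> \<theta>"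
    proof (rule two_closure_commute[OF A \<theta>])
      show "b \<in> carrier (BijGroup \<Omega>)" using b B by blast
      show "\<forall>a\<in>A. b \<otimes>\<^bsub>BijGroup \<Omega>\<^esub> a = a \<otimes>\<^bsub>BijGroup \<Omega>\<^esub> b"
        using commute b by (metis (no_types))
    qed
  qed
  moreover have "\<theta> \<in> carrier (BijGroup \<Omega>)" using \<theta> two_closure_carrier by blast
  ultimately show ?thesis
    using two_closure_commute[OF B \<eta>, of \<theta>] by simp
qed

lemma two_closure_inter_eq_one:
  assumes A: "subgroup A (BijGroup \<Omega>)" and B: "subgroup B (BijGroup \<Omega>)"
    and abelian_A: "\<forall>x\<in>A. \<forall>y\<in>A. x \<otimes>\<^bsub>BijGroup \<Omega>\<^esub> y = y \<otimes>\<^bsub>BijGroup \<Omega>\<^esub> x"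
    and abelian_B: "\<forall>x\<in>B. \<forall>y\<in>B. x \<otimes>\<^bsub>BijGroup \<Omega>\<^esub> y = y \<otimes>\<^bsub>BijGroup \<Omega>\<^esub> x"
    and f: "\<forall>a\<in>A. a [^]\<^bsub>BijGroup \<Omega>\<^esub> (f::nat) = \<one>\<^bsub>BijGroup \<Omega>\<^esub>" "\<forall>b\<in>B. b [^]\<^bsub>BijGroup \<Omega>\<^esub> f = b"
  shows "two_closure \<Omega> A \<inter> two_closure \<Omega> B = {\<one>\<^bsub>BijGroup \<Omega>\<^esub>}"
proof -
  interpret S: group "BijGroup \<Omega>" by (rule group_BijGroup)
  have AS: "A \<subseteq> carrier (BijGroup \<Omega>)" and BS: "B \<subseteq> carrier (BijGroup \<Omega>)"
    using subgroup.subset A B by blast+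
  have "\<theta> = \<one>\<^bsub>BijGroup \<Omega>\<^esub>" if "\<theta> \<in> two_closure \<Omega> A" "\<theta> \<in> two_closure \<Omega> B" for \<theta>
  proof -
    have "\<theta> [^]\<^bsub>BijGroup \<Omega>\<^esub> f = \<theta> [^]\<^bsub>BijGroup \<Omega>\<^esub> (0::nat)"
      by (rule two_closure_pow_eq[OF AS abelian_A that(1)]) (simp add: f(1))
    moreover have "\<theta> [^]\<^bsub>BijGroup \<Omega>\<^esub> f = \<theta> [^]\<^bsub>BijGroup \<Omega>\<^esub> (1::nat)"
      by (rule two_closure_pow_eq[OF BS abelian_B that(2)]) (use f(2) BS in auto)
    moreover have "\<theta> \<in> carrier (BijGroup \<Omega>)" using that(1) two_closure_carrier by blast
    ultimately show ?thesis by simp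
  qed
  moreover have "\<one>\<^bsub>BijGroup \<Omega>\<^esub> \<in> two_closure \<Omega> A" "\<one>\<^bsub>BijGroup \<Omega>\<^esub> \<in> two_closure \<Omega> B"
    using subgroup.one_closed subgroup_two_closure A B by blast+
  ultimately show ?thesis by blast
qed

lemma two_closure_set_mult_eq:
  assumes A: "subgroup A (BijGroup \<Omega>)" and B: "subgroup B (BijGroup \<Omega>)"
    and abelian: "\<forall>x\<in>A <#>\<^bsub>BijGroup \<Omega>\<^esub> B. \<forall>y\<in>A <#>\<^bsub>BijGroup \<Omega>\<^esub> B.
      x \<otimes>\<^bsub>BijGroup \<Omega>\<^esub> y = y \<otimes>\<^bsub>BijGroup \<Omega>\<^esub> x"
    and e: "\<forall>a\<in>A. a [^]\<^bsub>BijGroup \<Omega>\<^esub> (e::nat) = a" "\<forall>b\<in>B. b [^]\<^bsub>BijGroup \<Omega>\<^esub> e = \<one>\<^bsub>BijGroup \<Omega>\<^esub>"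
    and f: "\<forall>a\<in>A. a [^]\<^bsub>BijGroup \<Omega>\<^esub> (f::nat) = \<one>\<^bsub>BijGroup \<Omega>\<^esub>" "\<forall>b\<in>B. b [^]\<^bsub>BijGroup \<Omega>\<^esub> f = b"
  shows "two_closure \<Omega> (A <#>\<^bsub>BijGroup \<Omega>\<^esub> B) = two_closure \<Omega> A <#>\<^bsub>BijGroup \<Omega>\<^esub> two_closure \<Omega> B"
proof
  interpret S: group "BijGroup \<Omega>" by (rule group_BijGroup)
  define Z where "Z = A <#>\<^bsub>BijGroup \<Omega>\<^esub> B"
  have AS: "A \<subseteq> carrier (BijGroup \<Omega>)" and BS: "B \<subseteq> carrier (BijGroup \<Omega>)"
    using subgroup.subset A B by blast+
  then have ZS: "Z \<subseteq> carrier (BijGroup \<Omega>)" unfolding Z_def by (rule S.set_mult_closed)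
  have abelian_Z: "\<forall>x\<in>Z. \<forall>y\<in>Z. x \<otimes>\<^bsub>BijGroup \<Omega>\<^esub> y = y \<otimes>\<^bsub>BijGroup \<Omega>\<^esub> x"
    using abelian by (simp add: Z_def)
  have commute: "\<forall>a\<in>A. \<forall>b\<in>B. a \<otimes>\<^bsub>BijGroup \<Omega>\<^esub> b = b \<otimes>\<^bsub>BijGroup \<Omega>\<^esub> a"
    using abelian_Z S.subset_set_mult_left[OF B AS] S.subset_set_mult_right[OF A BS]
    unfolding Z_def by blast
  have Z_pow: "g [^]\<^bsub>BijGroup \<Omega>\<^esub> e \<in> A \<and> g [^]\<^bsub>BijGroup \<Omega>\<^esub> f \<in> B
      \<and> g [^]\<^bsub>BijGroup \<Omega>\<^esub> (e + f) = g [^]\<^bsub>BijGroup \<Omega>\<^esub> (1::nat)" if "g \<in> Z" for g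
  proof -
    obtain a b where a: "a \<in> A" and b: "b \<in> B" and g: "g = a \<otimes>\<^bsub>BijGroup \<Omega>\<^esub> b"
      using \<open>g \<in> Z\<close> unfolding Z_def set_mult_def by blast
    have "g [^]\<^bsub>BijGroup \<Omega>\<^esub> n = a [^]\<^bsub>BijGroup \<Omega>\<^esub> n \<otimes>\<^bsub>BijGroup \<Omega>\<^esub> b [^]\<^bsub>BijGroup \<Omega>\<^esub> n"
      for n :: nat
      using S.pow_mult_distrib commute a b AS BS g by blast
    moreover have "a \<in> carrier (BijGroup \<Omega>)" "b \<in> carrier (BijGroup \<Omega>)" using a b AS BS by blast+
    ultimately show ?thesis
      using a b e f by (simp add: S.nat_pow_mult[symmetric] g)
  qed
  show "two_closure \<Omega> (A <#>\<^bsub>BijGroup \<Omega>\<^esub> B) \<subseteq> two_closure \<Omega> A <#>\<^bsub>BijGroup \<Omega>\<^esub> two_closure \<Omega> B"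
  proof
    fix \<theta> assume "\<theta> \<in> two_closure \<Omega> (A <#>\<^bsub>BijGroup \<Omega>\<^esub> B)"
    then have \<theta>: "\<theta> \<in> two_closure \<Omega> Z" by (simp add: Z_def)
    have \<theta>S: "\<theta> \<in> carrier (BijGroup \<Omega>)" using \<theta> two_closure_carrier by blast
    have "\<theta> [^]\<^bsub>BijGroup \<Omega>\<^esub> (e + f) = \<theta> [^]\<^bsub>BijGroup \<Omega>\<^esub> (1::nat)"
      using two_closure_pow_eq[OF ZS abelian_Z \<theta>] Z_pow by blast
    then have "\<theta> = \<theta> [^]\<^bsub>BijGroup \<Omega>\<^esub> e \<otimes>\<^bsub>BijGroup \<Omega>\<^esub> \<theta> [^]\<^bsub>BijGroup \<Omega>\<^esub> f"
      using \<theta>S by (simp add: S.nat_pow_mult)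
    moreover have "\<theta> [^]\<^bsub>BijGroup \<Omega>\<^esub> e \<in> two_closure \<Omega> A"
      and "\<theta> [^]\<^bsub>BijGroup \<Omega>\<^esub> f \<in> two_closure \<Omega> B"
      using two_closure_pow[OF ZS abelian_Z \<theta>] Z_pow by blast+
    ultimately show "\<theta> \<in> two_closure \<Omega> A <#>\<^bsub>BijGroup \<Omega>\<^esub> two_closure \<Omega> B"
      unfolding set_mult_def by blast
  qed
  show "two_closure \<Omega> A <#>\<^bsub>BijGroup \<Omega>\<^esub> two_closure \<Omega> B \<subseteq> two_closure \<Omega> (A <#>\<^bsub>BijGroup \<Omega>\<^esub> B)"
    by (rule two_closure_set_mult[OF AS BS])
qed

lemma two_closure_internal_direct_product:
  assumes A: "subgroup A (BijGroup \<Omega>)" and B: "subgroup B (BijGroup \<Omega>)"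
    and abelian: "\<forall>x\<in>A <#>\<^bsub>BijGroup \<Omega>\<^esub> B. \<forall>y\<in>A <#>\<^bsub>BijGroup \<Omega>\<^esub> B.
      x \<otimes>\<^bsub>BijGroup \<Omega>\<^esub> y = y \<otimes>\<^bsub>BijGroup \<Omega>\<^esub> x"
    and e: "\<forall>a\<in>A. a [^]\<^bsub>BijGroup \<Omega>\<^esub> (e::nat) = a" "\<forall>b\<in>B. b [^]\<^bsub>BijGroup \<Omega>\<^esub> e = \<one>\<^bsub>BijGroup \<Omega>\<^esub>"
    and f: "\<forall>a\<in>A. a [^]\<^bsub>BijGroup \<Omega>\<^esub> (f::nat) = \<one>\<^bsub>BijGroup \<Omega>\<^esub>" "\<forall>b\<in>B. b [^]\<^bsub>BijGroup \<Omega>\<^esub> f = b"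
  shows "internal_direct_product \<Omega> (two_closure \<Omega> (A <#>\<^bsub>BijGroup \<Omega>\<^esub> B))
    (two_closure \<Omega> A) (two_closure \<Omega> B)"
proof -
  interpret S: group "BijGroup \<Omega>" by (rule group_BijGroup)
  have AS: "A \<subseteq> carrier (BijGroup \<Omega>)" and BS: "B \<subseteq> carrier (BijGroup \<Omega>)"
    using subgroup.subset A B by blast+
  have "A \<subseteq> A <#>\<^bsub>BijGroup \<Omega>\<^esub> B" "B \<subseteq> A <#>\<^bsub>BijGroup \<Omega>\<^esub> B"
    using S.subset_set_mult_left[OF B AS] S.subset_set_mult_right[OF A BS] .
  then have abelian_A: "\<forall>x\<in>A. \<forall>y\<in>A. x \<otimes>\<^bsub>BijGroup \<Omega>\<^esub> y = y \<otimes>\<^bsub>BijGroup \<Omega>\<^esub> x"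
    and abelian_B: "\<forall>x\<in>B. \<forall>y\<in>B. x \<otimes>\<^bsub>BijGroup \<Omega>\<^esub> y = y \<otimes>\<^bsub>BijGroup \<Omega>\<^esub> x"
    and commute: "\<forall>a\<in>A. \<forall>b\<in>B. a \<otimes>\<^bsub>BijGroup \<Omega>\<^esub> b = b \<otimes>\<^bsub>BijGroup \<Omega>\<^esub> a"
    using abelian by blast+
  show ?thesis
    unfolding internal_direct_product_def
    using subgroup_two_closure[OF A] subgroup_two_closure[OF B]
      two_closure_set_mult_eq[OF A B abelian e f]
      two_closure_inter_eq_one[OF A B abelian_A abelian_B f]
      two_closure_commute_elementwise[OF AS BS commute] by blast
qed

theorem mainTheorem4:
  fixes \<Omega> :: "'a set" and G H K :: "('a \<Rightarrow> 'a) set"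
  assumes "subgroup G (BijGroup \<Omega>)"
    and "finite G"
    and "internal_direct_product \<Omega> G H K"
    and "coprime (card H) (card K)"
  shows "internal_direct_product \<Omega> (two_closure \<Omega> (perm_center \<Omega> G))
           (two_closure \<Omega> (perm_center \<Omega> H)) (two_closure \<Omega> (perm_center \<Omega> K))"
proof -
  interpret S: group "BijGroup \<Omega>" by (rule group_BijGroup)
  have H: "subgroup H (BijGroup \<Omega>)" and K: "subgroup K (BijGroup \<Omega>)"
    and G: "G = H <#>\<^bsub>BijGroup \<Omega>\<^esub> K"
    and commute: "\<forall>h\<in>H. \<forall>k\<in>K. h \<otimes>\<^bsub>BijGroup \<Omega>\<^esub> k = k \<otimes>\<^bsub>BijGroup \<Omega>\<^esub> h"
    using assms(3) unfolding internal_direct_product_def by auto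
  have "finite H" "finite K"
    using finite_subset[OF _ assms(2)] G subgroup.subset H K
      S.subset_set_mult_left[OF K] S.subset_set_mult_right[OF H] by metis+
  obtain e :: nat where e: "\<forall>h\<in>H. h [^]\<^bsub>BijGroup \<Omega>\<^esub> e = h" "\<forall>k\<in>K. k [^]\<^bsub>BijGroup \<Omega>\<^esub> e = \<one>\<^bsub>BijGroup \<Omega>\<^esub>"
    using S.coprime_subgroups_exponent[OF H K \<open>finite K\<close> assms(4)] .
  obtain f :: nat where f: "\<forall>k\<in>K. k [^]\<^bsub>BijGroup \<Omega>\<^esub> f = k" "\<forall>h\<in>H. h [^]\<^bsub>BijGroup \<Omega>\<^esub> f = \<one>\<^bsub>BijGroup \<Omega>\<^esub>"
    using S.coprime_subgroups_exponent[OF K H \<open>finite H\<close>] assms(4) by (metis coprime_commute)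
  have Z: "perm_center \<Omega> G = perm_center \<Omega> H <#>\<^bsub>BijGroup \<Omega>\<^esub> perm_center \<Omega> K"
    unfolding perm_center_eq_center_of G by (rule S.center_of_set_mult[OF H K commute])
  have "\<forall>x\<in>perm_center \<Omega> G. \<forall>y\<in>perm_center \<Omega> G. x \<otimes>\<^bsub>BijGroup \<Omega>\<^esub> y = y \<otimes>\<^bsub>BijGroup \<Omega>\<^esub> x"
    unfolding perm_center_def by blast
  moreover have "\<forall>h\<in>perm_center \<Omega> H. h [^]\<^bsub>BijGroup \<Omega>\<^esub> e = h"
    "\<forall>h\<in>perm_center \<Omega> H. h [^]\<^bsub>BijGroup \<Omega>\<^esub> f = \<one>\<^bsub>BijGroup \<Omega>\<^esub>"
    "\<forall>k\<in>perm_center \<Omega> K. k [^]\<^bsub>BijGroup \<Omega>\<^esub> e = \<one>\<^bsub>BijGroup \<Omega>\<^esub>"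
    "\<forall>k\<in>perm_center \<Omega> K. k [^]\<^bsub>BijGroup \<Omega>\<^esub> f = k"
    using e f unfolding perm_center_def by blast+
  moreover have "subgroup (perm_center \<Omega> H) (BijGroup \<Omega>)" "subgroup (perm_center \<Omega> K) (BijGroup \<Omega>)"
    unfolding perm_center_eq_center_of using S.subgroup_center_of H K by blast+
  ultimately show ?thesis
    unfolding Z by (intro two_closure_internal_direct_product)
qed

end
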